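(* Let $p_1=3, p_2=5, p_3=7, p_4=11, p_5=13,\dots$ be the odd prime numbers in increasing order. Then for all $m,k\in\mathbb{N}$, $$\prod_{n=1}^m\left(\frac{p_n^{2k}}{p_n^{2k}-1}\right) > \sum_{n=0}^m \frac{1}{(2n+1)^{2k}}.$$
   Context: $\mathbb{N}=\{1,2,3,\dots\}$. *)

theory Defs
  imports Complex_Main "HOL-Computational_Algebra.Primes" "HOL-Library.Infinite_Set"
begin

text \<open>The n-th odd prime, 1-indexed: odd_prime 1 = 3, odd_prime 2 = 5, ...
  (enumerate is 0-indexed and lists an infinite set of naturals in increasing order).\<close>
definition odd_prime :: "nat \<Rightarrow> nat" where
  "odd_prime n = enumerate {p. prime p \<and> odd p} (n - 1)"

end

theory Submission
  imports Defs "HOL-Library.FuncSet"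
begin

text \<open>Expanding each Euler factor \<open>1 / (1 - p\<^sup>-\<^sup>2\<^sup>k)\<close> into a geometric series, the product over
  the odd primes \<open>p\<^sub>1, \<dots>, p\<^sub>m\<close> contains, by unique factorisation, the term \<open>1 / n\<^sup>2\<^sup>k\<close> of every
  odd \<open>n \<le> 2m + 1 \<le> p\<^sub>m\<close> exactly once, besides further nonnegative terms. Already the
  truncated geometric sums suffice for this, and truncation strictly decreases the product.\<close>

lemma infinite_odd_primes: "infinite {p :: nat. prime p \<and> odd p}"
proof -
  have "{p :: nat. prime p \<and> odd p} = {p. prime p} - {2}"
  proof (intro set_eqI iffI)
    fix p :: nat assume "p \<in> {p. prime p} - {2}"
    then show "p \<in> {p. prime p \<and> odd p}"
      using prime_ge_2_nat[of p] prime_odd_nat[of p] by force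
  qed auto
  then show ?thesis
    using Diff_infinite_finite[of "{2}" "{p. prime p}"] primes_infinite by simp
qed

lemma enumerate_odd_ge:
  fixes S :: "nat set"
  assumes "infinite S" and "\<And>s. s \<in> S \<Longrightarrow> odd s"
  shows "enumerate S 0 + 2 * i \<le> enumerate S i"
proof (induction i)
  case (Suc i)
  have "enumerate S i < enumerate S (Suc i)"
    using enumerate_step[OF assms(1)] .
  moreover have "odd (enumerate S i)" "odd (enumerate S (Suc i))"
    using assms enumerate_in_set by blast+
  ultimately have "enumerate S i + 2 \<le> enumerate S (Suc i)"
    by (auto elim!: oddE)
  with Suc show ?case by simp
qed simp

lemma odd_prime_mem: "odd_prime n \<in> {p. prime p \<and> odd p}"
  unfolding odd_prime_def using enumerate_in_set[OF infinite_odd_primes] .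

lemma prime_odd_prime: "prime (odd_prime n)"
  using odd_prime_mem by simp

lemma odd_odd_prime: "odd (odd_prime n)"
  using odd_prime_mem by simp

lemma odd_prime_ge:
  assumes "n \<ge> 1"
  shows "2 * n + 1 \<le> odd_prime n"
proof -
  have "odd_prime 1 \<noteq> 2"
    using odd_odd_prime[of 1] by auto
  moreover have "2 \<le> odd_prime 1"
    using prime_ge_2_nat[OF prime_odd_prime] .
  ultimately have "3 \<le> odd_prime 1"
    by linarith
  then show ?thesis
    using enumerate_odd_ge[OF infinite_odd_primes, of "n - 1"] assms
    by (simp add: odd_prime_def)
qed

lemma odd_prime_le_iff:
  assumes "i \<ge> 1" and "j \<ge> 1"
  shows "odd_prime i \<le> odd_prime j \<longleftrightarrow> i \<le> j"
  using assms enumerate_mono_le_iff[OF infinite_odd_primes, of "i - 1" "j - 1"]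
  by (simp add: odd_prime_def le_diff_iff)

lemma inj_on_odd_prime: "inj_on odd_prime {1..}"
proof (rule inj_onI)
  fix i j assume "i \<in> {1..}" "j \<in> {1..}" "odd_prime i = odd_prime j"
  then show "i = j"
    using odd_prime_le_iff[of i j] odd_prime_le_iff[of j i] by simp
qed

lemma odd_prime_image:
  assumes "m \<ge> 1"
  shows "odd_prime ` {1..m} = {p. prime p \<and> odd p \<and> p \<le> odd_prime m}"
proof
  show "odd_prime ` {1..m} \<subseteq> {p. prime p \<and> odd p \<and> p \<le> odd_prime m}"
  proof
    fix p assume "p \<in> odd_prime ` {1..m}"
    then obtain i where "i \<in> {1..m}" "p = odd_prime i"
      by blast
    then show "p \<in> {p. prime p \<and> odd p \<and> p \<le> odd_prime m}"
      using prime_odd_prime odd_odd_prime odd_prime_le_iff[of i m] assms by simp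
  qed
next
  show "{p. prime p \<and> odd p \<and> p \<le> odd_prime m} \<subseteq> odd_prime ` {1..m}"
  proof
    fix p assume p: "p \<in> {p. prime p \<and> odd p \<and> p \<le> odd_prime m}"
    then obtain j where j: "enumerate {p. prime p \<and> odd p} j = p"
      using enumerate_Ex[OF infinite_odd_primes] by auto
    then have "odd_prime (j + 1) = p"
      by (simp add: odd_prime_def)
    moreover have "j + 1 \<le> m"
      using p assms odd_prime_le_iff[of "j + 1" m] \<open>odd_prime (j + 1) = p\<close> by simp
    ultimately show "p \<in> odd_prime ` {1..m}"
      by (intro rev_image_eqI[of "j + 1"]) simp_all
  qed
qed

lemma prime_factors_odd_subset_odd_prime_image:
  assumes "m \<ge> 1" and "odd n" and "n \<le> 2 * m + 1"
  shows "prime_factors n \<subseteq> odd_prime ` {1..m}"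
proof
  fix q assume "q \<in> prime_factors n"
  then have "prime q" "q dvd n"
    by auto
  then have "odd q" "q \<le> n"
    using \<open>odd n\<close> dvd_trans[of 2 q n] dvd_imp_le odd_pos by blast+
  with \<open>prime q\<close> show "q \<in> odd_prime ` {1..m}"
    using assms(3) odd_prime_ge[OF assms(1)] unfolding odd_prime_image[OF assms(1)] by simp
qed

lemma prod_prime_power_multiplicity_superset:
  fixes n :: nat
  assumes "n > 0" and "finite P" and "\<And>p. p \<in> P \<Longrightarrow> prime p" and "prime_factors n \<subseteq> P"
  shows "(\<Prod>p\<in>P. p ^ multiplicity p n) = n"
proof -
  have "(\<Prod>p\<in>P. p ^ multiplicity p n) = (\<Prod>p\<in>prime_factors n. p ^ multiplicity p n)"
    using assms by (intro prod.mono_neutral_right)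
      (auto simp: prime_factors_multiplicity not_dvd_imp_multiplicity_0)
  also have "\<dots> = n"
    using prime_factorization_nat[OF \<open>n > 0\<close>] by simp
  finally show ?thesis .
qed

lemma multiplicity_less_self:
  fixes p n :: nat
  assumes "prime p" and "n > 0"
  shows "multiplicity p n < n"
proof -
  have "multiplicity p n < 2 ^ multiplicity p n"
    by (rule less_exp)
  also have "\<dots> \<le> p ^ multiplicity p n"
    using prime_ge_2_nat[OF \<open>prime p\<close>] by (simp add: power_mono)
  also have "\<dots> \<le> n"
    using multiplicity_dvd dvd_imp_le \<open>n > 0\<close> by blast
  finally show ?thesis .
qed

lemma sum_inverse_powers_le_truncated_euler_product:
  fixes P S :: "nat set" and e N :: nat
  assumes "finite P" and "\<And>p. p \<in> P \<Longrightarrow> prime p"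
    and "\<And>n. n \<in> S \<Longrightarrow> 0 < n \<and> n \<le> N \<and> prime_factors n \<subseteq> P"
  shows "(\<Sum>n\<in>S. 1 / real n ^ e) \<le> (\<Prod>p\<in>P. \<Sum>j<N. (1 / real p ^ e) ^ j)"
proof -
  define x where "x p = 1 / real p ^ e" for p
  define exps where "exps n = restrict (\<lambda>p. multiplicity p n) P" for n
  have factor: "(\<Prod>p\<in>P. p ^ multiplicity p n) = n" if "n \<in> S" for n
    using assms that by (intro prod_prime_power_multiplicity_superset) auto
  have "inj_on exps S"
  proof (rule inj_onI)
    fix a b assume "a \<in> S" "b \<in> S" "exps a = exps b"
    have "multiplicity p a = multiplicity p b" if "p \<in> P" for p
      using fun_cong[OF \<open>exps a = exps b\<close>, of p] that by (simp add: exps_def)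
    then have "(\<Prod>p\<in>P. p ^ multiplicity p a) = (\<Prod>p\<in>P. p ^ multiplicity p b)"
      by (intro prod.cong) simp_all
    with \<open>a \<in> S\<close> \<open>b \<in> S\<close> show "a = b"
      by (simp add: factor)
  qed
  have exps_range: "exps ` S \<subseteq> PiE P (\<lambda>_. {..<N})"
  proof
    fix g assume "g \<in> exps ` S"
    then obtain n where "n \<in> S" "g = exps n" by blast
    have "0 < n" "n \<le> N"
      using assms(3)[OF \<open>n \<in> S\<close>] by auto
    have "multiplicity p n < N" if "p \<in> P" for p
      using multiplicity_less_self[OF assms(2)[OF that] \<open>0 < n\<close>] \<open>n \<le> N\<close> by linarith
    then show "g \<in> PiE P (\<lambda>_. {..<N})"
      by (simp add: \<open>g = exps n\<close> exps_def restrict_PiE_iff)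
  qed
  have term_eq: "1 / real n ^ e = (\<Prod>p\<in>P. x p ^ exps n p)" if "n \<in> S" for n
  proof -
    have "(\<Prod>p\<in>P. x p ^ exps n p) = (\<Prod>p\<in>P. 1 / (real p ^ multiplicity p n) ^ e)"
      unfolding x_def exps_def
      by (intro prod.cong) (simp_all add: power_one_over[symmetric] power_mult[symmetric] mult.commute)
    also have "\<dots> = 1 / (\<Prod>p\<in>P. real p ^ multiplicity p n) ^ e"
      by (simp only: prod_dividef prod.neutral_const prod_power_distrib)
    also have "(\<Prod>p\<in>P. real p ^ multiplicity p n) = real (\<Prod>p\<in>P. p ^ multiplicity p n)"
      by simp
    finally show ?thesis
      using factor[OF that] by simp
  qed
  have "(\<Sum>n\<in>S. 1 / real n ^ e) = (\<Sum>n\<in>S. \<Prod>p\<in>P. x p ^ exps n p)"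
    using term_eq by (rule sum.cong[OF refl])
  also have "\<dots> = (\<Sum>g\<in>exps ` S. \<Prod>p\<in>P. x p ^ g p)"
    by (simp add: sum.reindex[OF \<open>inj_on exps S\<close>])
  also have "\<dots> \<le> (\<Sum>g\<in>PiE P (\<lambda>_. {..<N}). \<Prod>p\<in>P. x p ^ g p)"
    using exps_range \<open>finite P\<close> unfolding x_def
    by (intro sum_mono2) (auto simp: finite_PiE intro: prod_nonneg)
  also have "\<dots> = (\<Prod>p\<in>P. \<Sum>j<N. x p ^ j)"
    using \<open>finite P\<close> by (simp add: prod_sum_PiE)
  finally show ?thesis
    unfolding x_def .
qed

lemma prod_geometric_sum_less:
  fixes x :: "'a \<Rightarrow> real"
  assumes "finite A" and "A \<noteq> {}" and "\<And>i. i \<in> A \<Longrightarrow> 0 < x i \<and> x i < 1"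
  shows "(\<Prod>i\<in>A. \<Sum>j<N. x i ^ j) < (\<Prod>i\<in>A. 1 / (1 - x i))"
proof -
  have less: "(\<Sum>j<N. x i ^ j) < 1 / (1 - x i)" if "i \<in> A" for i
    using geometric_sum_less assms(3)[OF that] by blast
  obtain a where "a \<in> A"
    using \<open>A \<noteq> {}\<close> by blast
  show ?thesis
  proof (rule prod_mono_strict[of a])
    show "a \<in> A" "finite A" "(\<Sum>j<N. x a ^ j) < 1 / (1 - x a)"
      using \<open>a \<in> A\<close> \<open>finite A\<close> less by simp_all
  next
    fix i assume "i \<in> A"
    have "0 \<le> (\<Sum>j<N. x i ^ j)"
      using assms(3)[OF \<open>i \<in> A\<close>] by (intro sum_nonneg) simp
    then show "0 \<le> (\<Sum>j<N. x i ^ j) \<and> (\<Sum>j<N. x i ^ j) \<le> 1 / (1 - x i)"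
      using less[OF \<open>i \<in> A\<close>] by simp
    show "0 < 1 / (1 - x i)"
      using assms(3)[OF \<open>i \<in> A\<close>] by simp
  qed
qed

lemma sum_inverse_powers_less_euler_product:
  fixes P S :: "nat set" and e :: nat
  assumes "finite P" and "P \<noteq> {}" and "\<And>p. p \<in> P \<Longrightarrow> prime p" and "e \<ge> 1"
    and "finite S" and "\<And>n. n \<in> S \<Longrightarrow> 0 < n \<and> prime_factors n \<subseteq> P"
  shows "(\<Sum>n\<in>S. 1 / real n ^ e) < (\<Prod>p\<in>P. real p ^ e / (real p ^ e - 1))"
proof -
  have power_gt_1: "1 < real p ^ e" if "p \<in> P" for p
    using prime_gt_1_nat[OF assms(3)[OF that]] \<open>e \<ge> 1\<close> by (simp add: one_less_power)
  have inverse_power_bounds: "0 < 1 / real p ^ e \<and> 1 / real p ^ e < 1" if "p \<in> P" for p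
    using power_gt_1[OF that] prime_gt_0_nat[OF assms(3)[OF that]] by simp
  obtain N where "\<forall>n\<in>S. n \<le> N"
    using \<open>finite S\<close> finite_nat_set_iff_bounded_le by blast
  then have "(\<Sum>n\<in>S. 1 / real n ^ e) \<le> (\<Prod>p\<in>P. \<Sum>j<N. (1 / real p ^ e) ^ j)"
    using assms by (intro sum_inverse_powers_le_truncated_euler_product) auto
  also have "\<dots> < (\<Prod>p\<in>P. 1 / (1 - 1 / real p ^ e))"
    using assms(1,2) inverse_power_bounds by (rule prod_geometric_sum_less)
  also have "\<dots> = (\<Prod>p\<in>P. real p ^ e / (real p ^ e - 1))"
  proof (rule prod.cong[OF refl])
    fix p assume "p \<in> P"
    show "1 / (1 - 1 / real p ^ e) = real p ^ e / (real p ^ e - 1)"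
      using power_gt_1[OF \<open>p \<in> P\<close>] prime_gt_0_nat[OF assms(3)[OF \<open>p \<in> P\<close>]]
      by (simp add: field_simps)
  qed
  finally show ?thesis .
qed

theorem proposition2p3:
  fixes m k :: nat
  assumes "m \<ge> 1" and "k \<ge> 1"
  shows "(\<Prod>n=1..m. real (odd_prime n) ^ (2*k) / (real (odd_prime n) ^ (2*k) - 1))
           > (\<Sum>n=0..m. 1 / real (2*n+1) ^ (2*k))"
proof -
  define P where "P = odd_prime ` {1..m}"
  define S where "S = (\<lambda>n. 2 * n + 1) ` {0..m}"
  have smooth: "0 < n \<and> prime_factors n \<subseteq> P" if "n \<in> S" for n
    using that prime_factors_odd_subset_odd_prime_image[OF \<open>m \<ge> 1\<close>, of n]
    unfolding S_def P_def by auto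
  have "(\<Sum>n=0..m. 1 / real (2*n+1) ^ (2*k)) = (\<Sum>n\<in>S. 1 / real n ^ (2*k))"
    unfolding S_def by (subst sum.reindex) (auto simp: inj_on_def)
  also have "\<dots> < (\<Prod>p\<in>P. real p ^ (2*k) / (real p ^ (2*k) - 1))"
    using assms smooth prime_odd_prime unfolding P_def
    by (intro sum_inverse_powers_less_euler_product) (auto simp: S_def)
  also have "\<dots> = (\<Prod>n=1..m. real (odd_prime n) ^ (2*k) / (real (odd_prime n) ^ (2*k) - 1))"
    unfolding P_def using inj_on_subset[OF inj_on_odd_prime]
    by (subst prod.reindex) auto
  finally show ?thesis .
qed

end
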